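(* Let $N\ge 4$. Let $q_1,\dots,q_N\in(0,1)$ and $p_{i,k}\in(0,1)$ ($1\le i\le N$, $1\le k\le N-1$) satisfy $p_{i,k}>p_{j,k}$ whenever $i<j$ (for each $k$) and $p_{i,k}<p_{i,l}$ whenever $k<l$ (for each $i$). Let $\mathcal F_N$ be the set of $(N-1)\times N$ matrices over $\mathrm{GF}(2)$ of the form $$\mathbf F=\begin{pmatrix}1&1&0&\cdots&0&0\\ 1&0&1&\cdots&0&0\\ \vdots&\vdots&\vdots&\ddots&\vdots&\vdots\\ 1&0&0&\cdots&1&0\\ u_1&u_2&u_3&\cdots&u_{N-1}&1\end{pmatrix},$$ i.e. for $1\le j\le N-2$ row $j$ has ones exactly in columns $1$ and $j+1$, and the last row is $(u_1,\dots,u_{N-1},1)$ with $u_k\in\mathrm{GF}(2)$ and $u_1\oplus u_2\oplus\cdots\oplus u_{N-1}=1$. Then every element of $\mathcal F_N$ is admissible, and the matrix $$\hat{\mathbf F}_N=\begin{pmatrix}1&1&0&\cdots&0\\ 1&0&1&\cdots&0\\ \vdots&\vdots&\vdots&\ddots&\vdots\\ 1&0&0&\cdots&1\end{pmatrix}_{(N-1)\times N}$$ (row $j$ has ones exactly in columns $1$ and $j+1$, $j=1,\dots,N-1$; this is the element of $\mathcal F_N$ with $u_1=1$, $u_2=\cdots=u_{N-1}=0$) is the unique minimizer of $P_e^U$ over $\mathcal F_N$: $P_e^U(\mathbf F)\ge P_e^U(\hat{\mathbf F}_N)$ for all $\mathbf F\in\mathcal F_N$, with equality only if $\mathbf F=\hat{\mathbf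 F}_N$.
   Context: An $(N-1)\times N$ matrix $\mathbf F$ over $\mathrm{GF}(2)$ is admissible if, for every $j\in\{1,\dots,N\}$, the $(N-1)\times(N-1)$ matrix $\mathbf F_j$ obtained by deleting the $j$-th column of $\mathbf F$ is invertible over $\mathrm{GF}(2)$. For admissible $\mathbf F$, let $\mathbf G_{i,k}$ be the $k$-th column of $\mathbf F_i^{-1}$ (over $\mathrm{GF}(2)$) and $|\mathbf G_{i,k}|$ its Hamming weight. Given numbers $q_k\in(0,1)$ and $p_{i,k}\in(0,1)$, define $$P_e^U(\mathbf F)=\frac1N\sum_{i=1}^N\Big[\sum_{k=1,k\neq i}^N q_k+(N-1)q_i+\sum_{k=1}^{N-1}p_{i,k}\,|\mathbf G_{i,k}|\Big].$$ The class $\mathcal F_N$ consists of the matrices obtained by appending a row and a column to the $(N-1)$-user design $\hat{\mathbf F}_{N-1}$ (placed in the upper-left corner) while keeping all $\mathbf F_j$ invertible. *)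

theory Defs
  imports "HOL-Library.Z2" "Jordan_Normal_Form.Matrix"
begin

text \<open>Matrices over GF(2) are JNF matrices over the field type bit (HOL-Library.Z2).
  JNF indices are 0-based; the paper's 1-based indices are translated explicitly below.\<close>

text \<open>Delete the j-th column (1-based j, as in the paper).\<close>
definition del_col :: "'a mat \<Rightarrow> nat \<Rightarrow> 'a mat" where
  "del_col F j = mat (dim_row F) (dim_col F - 1)
     (\<lambda>(r, c). F $$ (r, if c < j - 1 then c else c + 1))"

definition admissible :: "bit mat \<Rightarrow> bool" where
  "admissible F \<longleftrightarrow> dim_col F = dim_row F + 1 \<and>
     (\<forall>j\<in>{1..dim_col F}. invertible_mat (del_col F j))"

definition mat_inv :: "bit mat \<Rightarrow> bit mat" where
  "mat_inv A = (SOME B. B \<in> carrier_mat (dim_row A) (dim_row A) \<and>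
                        inverts_mat A B \<and> inverts_mat B A)"

definition hamming_weight :: "bit vec \<Rightarrow> nat" where
  "hamming_weight v = card {r. r < dim_vec v \<and> v $ r \<noteq> 0}"

definition Gcol :: "bit mat \<Rightarrow> nat \<Rightarrow> nat \<Rightarrow> bit vec" where
  "Gcol F i k = col (mat_inv (del_col F i)) (k - 1)"

text \<open>The error-probability upper bound P_e^U; q and p are indexed 1-based as in the paper.\<close>
definition PeU :: "nat \<Rightarrow> (nat \<Rightarrow> real) \<Rightarrow> (nat \<Rightarrow> nat \<Rightarrow> real) \<Rightarrow> bit mat \<Rightarrow> real" where
  "PeU N q p F = (1 / real N) * (\<Sum>i = 1..N.
      (\<Sum>k \<in> {1..N} - {i}. q k) + real (N - 1) * q i
      + (\<Sum>k = 1..N - 1. p i k * real (hamming_weight (Gcol F i k))))"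

text \<open>The (N-1) x N matrix with rows j = 1..N-2 having ones in columns 1 and j+1, and last row
  (u_1,...,u_{N-1},1). Here u c (0-based c) stands for the paper's u_{c+1}.\<close>
definition FN_mat :: "nat \<Rightarrow> (nat \<Rightarrow> bit) \<Rightarrow> bit mat" where
  "FN_mat N u = mat (N - 1) N (\<lambda>(r, c).
     if r < N - 2 then (if c = 0 \<or> c = r + 1 then 1 else 0)
     else (if c = N - 1 then 1 else u c))"

definition FN_class :: "nat \<Rightarrow> bit mat set" where
  "FN_class N = {FN_mat N u | u. (\<Sum>c < N - 1. u c) = 1}"

definition F_hat :: "nat \<Rightarrow> bit mat" where
  "F_hat N = mat (N - 1) N (\<lambda>(r, c). if c = 0 \<or> c = r + 1 then 1 else 0)"

end

theory Submission
  imports Defs "Jordan_Normal_Form.Determinant"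
begin

text \<open>For F in F_N and a deleted column d, the k-th column of the inverse of F_d is the
  restriction of the unique x with x_d = 0 and F x = e_k; the sparse shape of F lets one write
  down the support of x explicitly, so every Hamming weight |G_{i,k}| is explicit. Compared with
  the hat matrix, switching on u_{k+1} (1 \<le> k \<le> N - 2) raises |G_{1,k}| by one and lowers
  |G_{k+1,k}| by one, and no other weight decreases. Since p_{1,k} > p_{k+1,k}, P_e^U grows by at
  least (p_{1,k} - p_{k+1,k}) / N for every such k.\<close>

text \<open>Keep GF(2) arithmetic as field arithmetic instead of letting simp turn it into XOR/AND.\<close>
declare add_bit_eq_xor [simp del] mult_bit_eq_and [simp del]

lemma mat_inv_inverse:
  assumes A: "A \<in> carrier_mat n n" and inv: "invertible_mat A"
  shows "mat_inv A \<in> carrier_mat n n" and "mat_inv A * A = 1\<^sub>m n"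
proof -
  obtain B where AB: "A * B = 1\<^sub>m n" and BA: "B * A = 1\<^sub>m (dim_row B)"
    using inv A unfolding invertible_mat_def inverts_mat_def by auto
  have "B \<in> carrier_mat n n"
    using arg_cong[OF AB, of dim_col] arg_cong[OF BA, of dim_col] A by auto
  then have "\<exists>B. B \<in> carrier_mat (dim_row A) (dim_row A) \<and> inverts_mat A B \<and> inverts_mat B A"
    using A AB BA unfolding inverts_mat_def by auto
  from someI_ex[OF this] show "mat_inv A \<in> carrier_mat n n" and "mat_inv A * A = 1\<^sub>m n"
    using A unfolding mat_inv_def inverts_mat_def by auto
qed

lemma col_mat_inv_eqI:
  assumes A: "A \<in> carrier_mat n n" and inv: "invertible_mat A"
    and v: "v \<in> carrier_vec n" and k: "k < n" and Av: "A *\<^sub>v v = unit_vec n k"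
  shows "col (mat_inv A) k = v"
proof -
  note inverse = mat_inv_inverse[OF A inv]
  have "v = (mat_inv A * A) *\<^sub>v v" using inverse v by simp
  also have "\<dots> = mat_inv A *\<^sub>v unit_vec n k" using assoc_mult_mat_vec[OF inverse(1) A v] Av by simp
  also have "\<dots> = col (mat_inv A) k" using inverse(1) k by (intro eq_vecI) (auto simp: col_def)
  finally show ?thesis by simp
qed

lemma invertible_mat_of_unit_vec_solutions:
  fixes A :: "'a :: field mat"
  assumes A: "A \<in> carrier_mat n n" and s: "\<And>k. k < n \<Longrightarrow> s k \<in> carrier_vec n"
    and As: "\<And>k. k < n \<Longrightarrow> A *\<^sub>v s k = unit_vec n k"
  shows "invertible_mat A"
proof -
  define B where "B = mat n n (\<lambda>(r, c). s c $ r)"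
  have B: "B \<in> carrier_mat n n" unfolding B_def by simp
  have colB: "col B c = s c" if "c < n" for c
    using s[OF that] that unfolding B_def by (intro eq_vecI) auto
  then have AB: "A * B = 1\<^sub>m n"
  proof (intro eq_matI)
    fix i j assume i: "i < dim_row (1\<^sub>m n :: 'a mat)" and j: "j < dim_col (1\<^sub>m n :: 'a mat)"
    have "(A * B) $$ (i, j) = (A *\<^sub>v s j) $ i" using A B i j colB by simp
    then show "(A * B) $$ (i, j) = 1\<^sub>m n $$ (i, j)" using As i j by simp
  qed (use A B in auto)
  have "B * A = 1\<^sub>m n" by (rule mat_mult_left_right_inverse[OF A B AB])
  then show ?thesis
    using A B AB unfolding invertible_mat_def inverts_mat_def by auto
qed

lemma del_col_carrier: "F \<in> carrier_mat n (Suc n) \<Longrightarrow> del_col F j \<in> carrier_mat n n"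
  unfolding del_col_def by auto

lemma sum_insert_index:
  fixes g :: "nat \<Rightarrow> 'a :: comm_monoid_add"
  assumes d: "d \<le> n" and gd: "g d = 0"
  shows "(\<Sum>c<n. g (insert_index d c)) = (\<Sum>c<Suc n. g c)"
proof -
  have "(\<Sum>c<n. g (insert_index d c)) = (\<Sum>c\<in>insert_index d ` {0..<n}. g c)"
    by (simp add: sum.reindex[OF insert_index_inj_on] lessThan_atLeast0)
  also have "\<dots> = (\<Sum>c\<in>{0..<Suc n} - {d}. g c)" using insert_index_image d by simp
  also have "\<dots> = (\<Sum>c\<in>{0..<Suc n}. g c)" using gd by (intro sum.mono_neutral_left) auto
  finally show ?thesis by (simp only: atLeast0LessThan)
qed

lemma del_col_mult_vec_insert_index:
  assumes F: "F \<in> carrier_mat n (Suc n)" and d: "d \<le> n" and xd: "x d = 0"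
  shows "del_col F (Suc d) *\<^sub>v vec n (x \<circ> insert_index d) = vec n (\<lambda>r. \<Sum>c<Suc n. F $$ (r, c) * x c)"
proof (rule eq_vecI)
  fix r assume "r < dim_vec (vec n (\<lambda>r. \<Sum>c<Suc n. F $$ (r, c) * x c))"
  then have r: "r < n" by simp
  have "(del_col F (Suc d) *\<^sub>v vec n (x \<circ> insert_index d)) $ r
      = (\<Sum>c<n. F $$ (r, insert_index d c) * x (insert_index d c))"
    using F r by (auto simp: del_col_def insert_index_def scalar_prod_def lessThan_atLeast0 intro: sum.cong)
  also have "\<dots> = (\<Sum>c<Suc n. F $$ (r, c) * x c)"
    by (rule sum_insert_index[OF d, of "\<lambda>c. F $$ (r, c) * x c"]) (simp add: xd)
  finally show "(del_col F (Suc d) *\<^sub>v vec n (x \<circ> insert_index d)) $ r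
      = vec n (\<lambda>r. \<Sum>c<Suc n. F $$ (r, c) * x c) $ r" using r by simp
qed (use F in \<open>simp add: del_col_def\<close>)

lemma hamming_weight_vec_insert_index:
  assumes d: "d \<le> n" and xd: "x d = 0"
  shows "hamming_weight (vec n (x \<circ> insert_index d)) = card {c. c < Suc n \<and> x c \<noteq> 0}"
proof -
  have "insert_index d ` {r. r < n \<and> x (insert_index d r) \<noteq> 0}
      = {c \<in> insert_index d ` {0..<n}. x c \<noteq> 0}" by auto
  also have "\<dots> = {c. c < Suc n \<and> x c \<noteq> 0}" using insert_index_image[of d n] d xd by auto
  finally have "insert_index d ` {r. r < n \<and> x (insert_index d r) \<noteq> 0} = {c. c < Suc n \<and> x c \<noteq> 0}" .
  moreover have "hamming_weight (vec n (x \<circ> insert_index d))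
      = card {r. r < n \<and> x (insert_index d r) \<noteq> 0}"
    unfolding hamming_weight_def by (intro arg_cong[where f = card]) auto
  ultimately show ?thesis using card_image[OF insert_index_inj_on] by metis
qed

lemma FN_mat_carrier: "FN_mat (Suc n) u \<in> carrier_mat n (Suc n)"
  unfolding FN_mat_def by simp

lemma FN_mat_row_sum:
  assumes r: "r < n - 1"
  shows "(\<Sum>c<Suc n. FN_mat (Suc n) u $$ (r, c) * x c) = x 0 + x (Suc r)"
proof -
  have "(\<Sum>c<Suc n. FN_mat (Suc n) u $$ (r, c) * x c)
      = (\<Sum>c<Suc n. (if c = 0 then x c else 0) + (if c = Suc r then x c else 0))"
    using r by (intro sum.cong) (auto simp: FN_mat_def)
  also have "\<dots> = x 0 + x (Suc r)" using r by (simp add: sum.distrib) arith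
  finally show ?thesis .
qed

lemma FN_mat_last_row_sum:
  assumes n: "1 \<le> n"
  shows "(\<Sum>c<Suc n. FN_mat (Suc n) u $$ (n - 1, c) * x c) = (\<Sum>c<n. u c * x c) + x n"
  using n by (simp add: FN_mat_def)

text \<open>With 0-based indices, this is the set of columns of F = FN_mat (Suc n) u on which the
  solution x of F x = e_k with x_d = 0 is nonzero; read off on the remaining columns, x is the
  k-th column of the inverse of F with column d deleted.\<close>
definition FN_sol_support :: "nat \<Rightarrow> (nat \<Rightarrow> bit) \<Rightarrow> nat \<Rightarrow> nat \<Rightarrow> nat set" where
  "FN_sol_support n u d k =
    (if k = n - 1 then (if d = n then {..<n} else {n})
     else if d = n then (if u (Suc k) = 0 then {Suc k} else {..<n} - {Suc k})
     else if d = Suc k then {..<n} - {d} \<union> (if u d = 0 then {n} else {})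
     else insert (Suc k) (if u (Suc k) = 0 then {} else {n}))"

lemma FN_sol_support_subset: "k < n \<Longrightarrow> FN_sol_support n u d k \<subseteq> {..n}"
  unfolding FN_sol_support_def by auto

lemma FN_sol_support_not_deleted: "d \<le> n \<Longrightarrow> k < n \<Longrightarrow> d \<notin> FN_sol_support n u d k"
  unfolding FN_sol_support_def by auto

lemma FN_sol_support_row:
  assumes "d \<le> n" "k < n" "r < n - 1"
  shows "of_bool (0 \<in> FN_sol_support n u d k) + of_bool (Suc r \<in> FN_sol_support n u d k)
    = (of_bool (r = k) :: bit)"
  using assms by (auto simp: FN_sol_support_def)

lemma FN_sol_support_last_row:
  assumes su: "(\<Sum>c<n. u c) = 1" and d: "d \<le> n" and k: "k < n"
  shows "(\<Sum>c<n. u c * of_bool (c \<in> FN_sol_support n u d k)) + of_bool (n \<in> FN_sol_support n u d k)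
    = of_bool (n - 1 = k)"
proof -
  let ?S = "FN_sol_support n u d k"
  have restrict: "(\<Sum>c<n. u c * of_bool (c \<in> ?S)) = sum u ({..<n} \<inter> ?S)"
    by (auto simp: sum.inter_restrict intro!: sum.cong)
  have sum_remove: "sum u ({..<n} - {j}) = 1 + u j" if "j < n" for j
    using su that by (simp add: sum_diff1)
  show ?thesis
    unfolding restrict using d k sum_remove[of "Suc k"] sum_remove[of d] su
    by (cases "u (Suc k)"; cases "u d") (auto simp: FN_sol_support_def Int_insert_right Int_absorb1)
qed

lemma FN_mat_mult_sol_support:
  assumes n: "1 \<le> n" and su: "(\<Sum>c<n. u c) = 1" and d: "d \<le> n" and k: "k < n" and r: "r < n"
  shows "(\<Sum>c<Suc n. FN_mat (Suc n) u $$ (r, c) * of_bool (c \<in> FN_sol_support n u d k))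
    = of_bool (r = k)"
proof (cases "r < n - 1")
  case True
  then show ?thesis
    by (simp only: FN_mat_row_sum[OF True] FN_sol_support_row[OF d k True])
next
  case False
  then have "r = n - 1" using r by simp
  then show ?thesis
    by (simp only: FN_mat_last_row_sum[OF n] FN_sol_support_last_row[OF su d k])
qed

lemma del_col_FN_mat_mult_sol_support:
  assumes n: "1 \<le> n" and su: "(\<Sum>c<n. u c) = 1" and d: "d \<le> n" and k: "k < n"
  shows "del_col (FN_mat (Suc n) u) (Suc d)
      *\<^sub>v vec n ((\<lambda>c. of_bool (c \<in> FN_sol_support n u d k)) \<circ> insert_index d)
    = unit_vec n k"
proof -
  have "del_col (FN_mat (Suc n) u) (Suc d)
      *\<^sub>v vec n ((\<lambda>c. of_bool (c \<in> FN_sol_support n u d k)) \<circ> insert_index d)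
    = vec n (\<lambda>r. \<Sum>c<Suc n. FN_mat (Suc n) u $$ (r, c) * of_bool (c \<in> FN_sol_support n u d k))"
    by (rule del_col_mult_vec_insert_index[OF FN_mat_carrier d]) (simp add: FN_sol_support_not_deleted[OF d k])
  also have "\<dots> = unit_vec n k"
  proof (rule eq_vecI)
    fix r assume "r < dim_vec (unit_vec n k :: bit vec)"
    then show "vec n (\<lambda>r. \<Sum>c<Suc n. FN_mat (Suc n) u $$ (r, c) * of_bool (c \<in> FN_sol_support n u d k))
      $ r = unit_vec n k $ r"
      using FN_mat_mult_sol_support[OF n su d k] by (simp add: unit_vec_def)
  qed simp
  finally show ?thesis .
qed

lemma invertible_del_col_FN_mat:
  assumes "1 \<le> n" and "(\<Sum>c<n. u c) = 1" and "d \<le> n"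
  shows "invertible_mat (del_col (FN_mat (Suc n) u) (Suc d))"
  by (rule invertible_mat_of_unit_vec_solutions[OF del_col_carrier[OF FN_mat_carrier]
        _ del_col_FN_mat_mult_sol_support[OF assms]]) simp

lemma FN_mat_admissible:
  assumes "1 \<le> n" and "(\<Sum>c<n. u c) = 1"
  shows "admissible (FN_mat (Suc n) u)"
  unfolding admissible_def
proof (intro conjI ballI)
  fix j assume "j \<in> {1..dim_col (FN_mat (Suc n) u)}"
  then have "j = Suc (j - 1)" and "j - 1 \<le> n" using FN_mat_carrier[of n u] by auto
  then show "invertible_mat (del_col (FN_mat (Suc n) u) j)"
    using invertible_del_col_FN_mat[OF assms] by metis
qed (use FN_mat_carrier[of n u] in auto)

lemma hamming_weight_Gcol_FN_mat:
  assumes n: "1 \<le> n" and su: "(\<Sum>c<n. u c) = 1" and i: "i \<in> {1..Suc n}" and k: "k \<in> {1..n}"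
  shows "hamming_weight (Gcol (FN_mat (Suc n) u) i k) = card (FN_sol_support n u (i - 1) (k - 1))"
proof -
  define d k' where "d = i - 1" and "k' = k - 1"
  then have i_eq: "i = Suc d" and k_eq: "k = Suc k'" and d: "d \<le> n" and k': "k' < n"
    using i k by auto
  let ?S = "FN_sol_support n u d k'"
  have "Gcol (FN_mat (Suc n) u) i k = vec n ((\<lambda>c. of_bool (c \<in> ?S)) \<circ> insert_index d)"
    unfolding Gcol_def i_eq k_eq diff_Suc_1
    by (rule col_mat_inv_eqI[OF del_col_carrier[OF FN_mat_carrier] invertible_del_col_FN_mat[OF n su d]
          _ k' del_col_FN_mat_mult_sol_support[OF n su d k']]) simp
  also have "hamming_weight \<dots> = card {c. c < Suc n \<and> c \<in> ?S}"
    using hamming_weight_vec_insert_index[OF d] FN_sol_support_not_deleted[OF d k'] by simp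
  also have "{c. c < Suc n \<and> c \<in> ?S} = ?S"
    using FN_sol_support_subset[OF k', of u d] by (auto simp: less_Suc_eq_le)
  finally show ?thesis unfolding i_eq k_eq by simp
qed

definition u_hat :: "nat \<Rightarrow> bit" where
  "u_hat c = of_bool (c = 0)"

lemma sum_u_hat: "1 \<le> n \<Longrightarrow> (\<Sum>c<n. u_hat c) = 1"
  unfolding u_hat_def by (simp add: of_bool_def sum.delta)

lemma F_hat_eq_FN_mat_u_hat: "1 \<le> n \<Longrightarrow> F_hat (Suc n) = FN_mat (Suc n) u_hat"
  unfolding F_hat_def FN_mat_def u_hat_def by (intro eq_matI) auto

lemma FN_mat_eq_F_hat:
  assumes n: "1 \<le> n" and su: "(\<Sum>c<n. u c) = 1" and u0: "\<And>k. k \<in> {1..<n} \<Longrightarrow> u k = 0"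
  shows "FN_mat (Suc n) u = F_hat (Suc n)"
proof -
  have "(\<Sum>c<n. u c) = u 0"
    using n u0 by (subst sum.mono_neutral_right[where S = "{0}"]) auto
  then have "\<forall>c<n. u c = u_hat c" using su u0 by (auto simp: u_hat_def)
  then show ?thesis
    unfolding F_hat_eq_FN_mat_u_hat[OF n] FN_mat_def by (intro eq_matI) auto
qed

lemma FN_sol_support_last_indep: "FN_sol_support n u d (n - 1) = FN_sol_support n v d (n - 1)"
  unfolding FN_sol_support_def by simp

lemma card_FN_sol_support_0:
  assumes "1 \<le> n" and "k < n - 1"
  shows "card (FN_sol_support n u 0 k) = card (FN_sol_support n u_hat 0 k) + of_bool (u (Suc k) = 1)"
  using assms by (cases "u (Suc k)") (auto simp: FN_sol_support_def u_hat_def)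

lemma card_FN_sol_support_diag:
  assumes "k < n - 1"
  shows "card (FN_sol_support n u_hat (Suc k) k)
    = card (FN_sol_support n u (Suc k) k) + of_bool (u (Suc k) = 1)"
  using assms by (cases "u (Suc k)") (auto simp: FN_sol_support_def u_hat_def)

lemma card_FN_sol_support_u_hat_le:
  assumes "d \<le> n" and "k < n" and "d \<noteq> Suc k"
  shows "card (FN_sol_support n u_hat d k) \<le> card (FN_sol_support n u d k)"
  using assms by (cases "u (Suc k)") (auto simp: FN_sol_support_def u_hat_def)

lemma weighted_card_FN_sol_support_diff_ge:
  fixes p :: "nat \<Rightarrow> real"
  assumes n: "1 \<le> n" and p: "\<And>i. i \<in> {1..Suc n} \<Longrightarrow> 0 \<le> p i" and k: "k \<in> {1..n}"
  shows "of_bool (k < n \<and> u k = 1) * (p 1 - p (Suc k))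
    \<le> (\<Sum>i = 1..Suc n. p i * (real (card (FN_sol_support n u (i - 1) (k - 1)))
                              - real (card (FN_sol_support n u_hat (i - 1) (k - 1)))))"
    (is "_ \<le> (\<Sum>i = 1..Suc n. ?gain i)")
proof (cases "k = n")
  case True
  then show ?thesis using FN_sol_support_last_indep[of n u _ u_hat] by simp
next
  case False
  then have k_lt: "k - 1 < n - 1" and k_eq: "Suc (k - 1) = k" using k by auto
  have "real (card (FN_sol_support n u 0 (k - 1))) - real (card (FN_sol_support n u_hat 0 (k - 1)))
      = of_bool (u k = 1)"
    using card_FN_sol_support_0[OF n k_lt, of u] unfolding k_eq by simp
  then have gain_first: "?gain 1 = p 1 * of_bool (u k = 1)" by simp
  have "real (card (FN_sol_support n u k (k - 1))) - real (card (FN_sol_support n u_hat k (k - 1)))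
      = - of_bool (u k = 1)"
    using card_FN_sol_support_diag[OF k_lt, of u] unfolding k_eq by simp
  then have gain_diagonal: "?gain (Suc k) = - p (Suc k) * of_bool (u k = 1)" by simp
  have "of_bool (k < n \<and> u k = 1) * (p 1 - p (Suc k)) = ?gain 1 + ?gain (Suc k)"
    unfolding gain_first gain_diagonal using False k by (simp add: algebra_simps)
  also have "\<dots> = (\<Sum>i\<in>{1, Suc k}. ?gain i)" using k by simp
  also have "\<dots> \<le> (\<Sum>i = 1..Suc n. ?gain i)"
  proof (rule sum_mono2)
    fix i assume i: "i \<in> {1..Suc n} - {1, Suc k}"
    then have "card (FN_sol_support n u_hat (i - 1) (k - 1)) \<le> card (FN_sol_support n u (i - 1) (k - 1))"
      using k by (intro card_FN_sol_support_u_hat_le) auto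
    then show "0 \<le> ?gain i" using p i by simp
  qed (use k in auto)
  finally show ?thesis .
qed

lemma PeU_diff:
  "PeU N q p F - PeU N q p G = (\<Sum>i = 1..N. \<Sum>k = 1..N - 1.
     p i k * (real (hamming_weight (Gcol F i k)) - real (hamming_weight (Gcol G i k)))) / real N"
  unfolding PeU_def right_diff_distrib[symmetric] sum_subtractf[symmetric] add_diff_cancel_left
  by simp

lemma PeU_FN_mat_minus_PeU_F_hat_ge:
  assumes n: "1 \<le> n" and su: "(\<Sum>c<n. u c) = 1"
    and p: "\<And>i k. i \<in> {1..Suc n} \<Longrightarrow> k \<in> {1..n} \<Longrightarrow> 0 \<le> p i k"
  shows "(\<Sum>k\<in>{1..<n}. of_bool (u k = 1) * (p 1 k - p (Suc k) k)) / real (Suc n)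
    \<le> PeU (Suc n) q p (FN_mat (Suc n) u) - PeU (Suc n) q p (F_hat (Suc n))"
proof -
  let ?gain = "\<lambda>i k. p i k * (real (card (FN_sol_support n u (i - 1) (k - 1)))
                               - real (card (FN_sol_support n u_hat (i - 1) (k - 1))))"
  have "(\<Sum>k\<in>{1..<n}. of_bool (u k = 1) * (p 1 k - p (Suc k) k))
      = (\<Sum>k = 1..n. of_bool (k < n \<and> u k = 1) * (p 1 k - p (Suc k) k))"
    by (intro sum.mono_neutral_cong_left) auto
  also have "\<dots> \<le> (\<Sum>k = 1..n. \<Sum>i = 1..Suc n. ?gain i k)"
    using p by (intro sum_mono weighted_card_FN_sol_support_diff_ge[OF n]) auto
  also have "\<dots> = (\<Sum>i = 1..Suc n. \<Sum>k = 1..n. ?gain i k)" by (rule sum.swap)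
  finally have "(\<Sum>k\<in>{1..<n}. of_bool (u k = 1) * (p 1 k - p (Suc k) k)) / real (Suc n)
      \<le> (\<Sum>i = 1..Suc n. \<Sum>k = 1..n. ?gain i k) / real (Suc n)"
    by (rule divide_right_mono) simp
  also have "\<dots> = PeU (Suc n) q p (FN_mat (Suc n) u) - PeU (Suc n) q p (F_hat (Suc n))"
    unfolding PeU_diff F_hat_eq_FN_mat_u_hat[OF n] diff_Suc_1
    by (intro arg_cong[where f = "\<lambda>x. x / real (Suc n)"] sum.cong refl)
      (simp add: hamming_weight_Gcol_FN_mat[OF n su] hamming_weight_Gcol_FN_mat[OF n sum_u_hat[OF n]])
  finally show ?thesis .
qed

lemma PeU_F_hat_minimal:
  assumes n: "1 \<le> n" and su: "(\<Sum>c<n. u c) = 1"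
    and p: "\<And>i k. i \<in> {1..Suc n} \<Longrightarrow> k \<in> {1..n} \<Longrightarrow> 0 \<le> p i k"
    and p_first: "\<And>k. k \<in> {1..<n} \<Longrightarrow> p (Suc k) k < p 1 k"
  shows "PeU (Suc n) q p (F_hat (Suc n)) \<le> PeU (Suc n) q p (FN_mat (Suc n) u)"
    and "PeU (Suc n) q p (FN_mat (Suc n) u) = PeU (Suc n) q p (F_hat (Suc n))
      \<Longrightarrow> FN_mat (Suc n) u = F_hat (Suc n)"
proof -
  let ?low = "\<lambda>k. of_bool (u k = 1) * (p 1 k - p (Suc k) k)"
  have low_nonneg: "0 \<le> ?low k" if "k \<in> {1..<n}" for k using p_first[OF that] by simp
  have bound: "(\<Sum>k\<in>{1..<n}. ?low k) / real (Suc n)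
      \<le> PeU (Suc n) q p (FN_mat (Suc n) u) - PeU (Suc n) q p (F_hat (Suc n))"
    by (rule PeU_FN_mat_minus_PeU_F_hat_ge[OF n su p])
  have "0 \<le> (\<Sum>k\<in>{1..<n}. ?low k) / real (Suc n)"
    by (intro divide_nonneg_nonneg sum_nonneg low_nonneg) auto
  with bound show "PeU (Suc n) q p (F_hat (Suc n)) \<le> PeU (Suc n) q p (FN_mat (Suc n) u)"
    by linarith
  assume eq: "PeU (Suc n) q p (FN_mat (Suc n) u) = PeU (Suc n) q p (F_hat (Suc n))"
  have "u k = 0" if k: "k \<in> {1..<n}" for k
  proof (rule ccontr)
    assume "u k \<noteq> 0"
    then have "0 < ?low k" using p_first[OF k] by simp
    then have "0 < (\<Sum>k\<in>{1..<n}. ?low k) / real (Suc n)"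
      by (intro divide_pos_pos sum_pos2[OF _ k] low_nonneg) auto
    with bound eq show False by linarith
  qed
  then show "FN_mat (Suc n) u = F_hat (Suc n)" by (rule FN_mat_eq_F_hat[OF n su])
qed

theorem theorem6:
  fixes N :: nat and q :: "nat \<Rightarrow> real" and p :: "nat \<Rightarrow> nat \<Rightarrow> real"
  assumes N4: "N \<ge> 4"
    and q01: "\<And>k. k \<in> {1..N} \<Longrightarrow> 0 < q k \<and> q k < 1"
    and p01: "\<And>i k. i \<in> {1..N} \<Longrightarrow> k \<in> {1..N - 1} \<Longrightarrow> 0 < p i k \<and> p i k < 1"
    and p_dec: "\<And>i j k. i \<in> {1..N} \<Longrightarrow> j \<in> {1..N} \<Longrightarrow> k \<in> {1..N - 1} \<Longrightarrow>
                  i < j \<Longrightarrow> p i k > p j k"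
    and p_inc: "\<And>i k l. i \<in> {1..N} \<Longrightarrow> k \<in> {1..N - 1} \<Longrightarrow> l \<in> {1..N - 1} \<Longrightarrow>
                  k < l \<Longrightarrow> p i k < p i l"
  shows "(\<forall>F \<in> FN_class N. admissible F) \<and> F_hat N \<in> FN_class N \<and>
         (\<forall>F \<in> FN_class N. PeU N q p F \<ge> PeU N q p (F_hat N) \<and>
                             (PeU N q p F = PeU N q p (F_hat N) \<longrightarrow> F = F_hat N))"
proof -
  obtain n where N_eq: "N = Suc n" and n: "1 \<le> n" using N4 by (cases N) auto
  have class_eq: "FN_class (Suc n) = {FN_mat (Suc n) u | u. (\<Sum>c<n. u c) = 1}"
    unfolding FN_class_def by simp
  have p_nonneg: "0 \<le> p i k" if "i \<in> {1..Suc n}" and "k \<in> {1..n}" for i k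
    using p01[of i k] that unfolding N_eq by simp
  have p_first: "p (Suc k) k < p 1 k" if "k \<in> {1..<n}" for k
    using p_dec[of 1 "Suc k" k] that unfolding N_eq by simp
  show ?thesis
    using FN_mat_admissible[OF n] F_hat_eq_FN_mat_u_hat[OF n] sum_u_hat[OF n]
      PeU_F_hat_minimal[OF n _ p_nonneg p_first]
    unfolding N_eq class_eq by auto
qed

end
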